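(* Let $f$ be a symmetric probability density on $\mathbb R$ with distribution function $F$ and finite variance $\sigma^2(f)=\int_{\mathbb R}x^2f(x)\,dx>0$. Put $v(x)=\int_{-\infty}^x uf(u)\,du$ and $q(s)=\int_{-\infty}^s v(x)f(x)\,dx$. Then $$45\Big(\int_{\mathbb R}q(s)f(s)\,ds\Big)^2<\sigma^2(f).$$ Equivalently, the integrated Chapman–Moses statistic $\bar\omega_n^1=\int_{\mathbb R}\sqrt n\int_{-\infty}^s(F_n(t)-F(t))\,dF(t)\,dF(s)$ is never locally asymptotically optimal in the Bahadur sense under the skew alternative $h(x,\theta)=2f(x)G(\theta x)$.
   Context: $F_n$ denotes the empirical distribution function of the sample. The local Bahadur efficiency of $\bar\omega_n^1$ under the skew alternative equals $45(\int q f)^2/\sigma^2(f)$, and local asymptotic optimality means that this efficiency equals $1$. *)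

theory Defs
  imports "HOL-Analysis.Analysis"
begin

definition sigma2 :: "(real \<Rightarrow> real) \<Rightarrow> real" where
  "sigma2 f = (LINT x|lborel. x\<^sup>2 * f x)"

definition vfun :: "(real \<Rightarrow> real) \<Rightarrow> real \<Rightarrow> real" where
  "vfun f x = (LINT u:{..x}|lborel. u * f u)"

definition qfun :: "(real \<Rightarrow> real) \<Rightarrow> real \<Rightarrow> real" where
  "qfun f s = (LINT x:{..s}|lborel. vfun f x * f x)"

end

theory Submission
  imports Defs "HOL-Probability.Distributions" "HOL-Probability.Distribution_Functions"
begin

text \<open>Let X have density f and distribution function F. Two applications of Fubini's theorem
turn \<open>\<integral> q f\<close> into \<open>E[X H(X)]\<close> with \<open>H(u) = E[(1 - F(X)) 1{X \<ge> u}]\<close>. Symmetry gives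
\<open>F(-x) = 1 - F(x)\<close>, hence \<open>H(u) - H(-u) = 1/2 - F(u)\<close> and \<open>2 \<integral> q f = E[X (1/2 - F(X))]\<close>.
As F is continuous, F(X) is uniform on [0,1], so \<open>E[(F(X) - 1/2)\<^sup>2] = 1/12\<close>, and Cauchy-Schwarz gives
\<open>(\<integral> q f)\<^sup>2 \<le> \<sigma>\<^sup>2/48 < \<sigma>\<^sup>2/45\<close>.\<close>

lemma quadratic_nonneg_imp_discrim_le:
  fixes a b c :: real
  assumes "0 \<le> a" and nonneg: "\<And>t. 0 \<le> a * t\<^sup>2 - 2 * b * t + c"
  shows "b\<^sup>2 \<le> a * c"
proof (cases "a = 0")
  case True
  have "b = 0"
  proof (rule ccontr)
    assume "b \<noteq> 0"
    then show False using nonneg[of "(c + 1) / (2 * b)"] True by (simp add: field_simps)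
  qed
  with True show ?thesis by simp
next
  case False
  with \<open>0 \<le> a\<close> have "0 < a" by simp
  have "0 \<le> a * (b / a)\<^sup>2 - 2 * b * (b / a) + c" by (rule nonneg)
  also have "\<dots> = (a * c - b\<^sup>2) / a" using \<open>0 < a\<close> by (simp add: field_simps power2_eq_square)
  finally show ?thesis using \<open>0 < a\<close> by (simp add: zero_le_divide_iff)
qed

lemma cauchy_schwarz_integral:
  fixes g h :: "'a \<Rightarrow> real"
  assumes g2: "integrable M (\<lambda>x. (g x)\<^sup>2)" and h2: "integrable M (\<lambda>x. (h x)\<^sup>2)"
    and gh: "integrable M (\<lambda>x. g x * h x)"
  shows "(\<integral>x. g x * h x \<partial>M)\<^sup>2 \<le> (\<integral>x. (g x)\<^sup>2 \<partial>M) * (\<integral>x. (h x)\<^sup>2 \<partial>M)"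
proof (rule quadratic_nonneg_imp_discrim_le)
  show "0 \<le> (\<integral>x. (g x)\<^sup>2 \<partial>M)" by simp
  fix t
  have "0 \<le> (\<integral>x. (t * g x - h x)\<^sup>2 \<partial>M)" by simp
  also have "\<dots> = (\<integral>x. t\<^sup>2 * (g x)\<^sup>2 - 2 * t * (g x * h x) + (h x)\<^sup>2 \<partial>M)"
    by (simp add: power2_eq_square algebra_simps)
  also have "\<dots> = (\<integral>x. (g x)\<^sup>2 \<partial>M) * t\<^sup>2 - 2 * (\<integral>x. g x * h x \<partial>M) * t + (\<integral>x. (h x)\<^sup>2 \<partial>M)"
    using g2 h2 gh by simp
  finally show "0 \<le> (\<integral>x. (g x)\<^sup>2 \<partial>M) * t\<^sup>2 - 2 * (\<integral>x. g x * h x \<partial>M) * t + (\<integral>x. (h x)\<^sup>2 \<partial>M)" .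
qed

lemma integrable_mult_bounded:
  fixes g k :: "'a \<Rightarrow> real"
  assumes g: "integrable M g" and k: "k \<in> borel_measurable M" and k_bound: "\<And>x. \<bar>k x\<bar> \<le> B"
  shows "integrable M (\<lambda>x. g x * k x)"
proof (rule Bochner_Integration.integrable_bound)
  show "integrable M (\<lambda>x. B * \<bar>g x\<bar>)" using g by simp
  show "AE x in M. norm (g x * k x) \<le> norm (B * \<bar>g x\<bar>)"
  proof (rule AE_I2)
    fix x
    have "\<bar>g x\<bar> * \<bar>k x\<bar> \<le> \<bar>g x\<bar> * B" by (rule mult_left_mono) (simp_all add: k_bound)
    moreover have "0 \<le> B" using order_trans[OF abs_ge_zero k_bound] .
    ultimately show "norm (g x * k x) \<le> norm (B * \<bar>g x\<bar>)" by (simp add: abs_mult mult.commute)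
  qed
qed (use g k in simp_all)

context real_distribution
begin

lemma measure_atLeast_eq_cdf:
  assumes "measure M {a} = 0"
  shows "measure M {a..} = 1 - cdf M a"
proof -
  have "measure M {a..} = 1 - measure M {..<a}"
    using prob_compl[of "{..<a}"] by (simp add: Compl_eq_Diff_UNIV[symmetric] not_less Compl_lessThan)
  also have "measure M {..<a} = cdf M a"
    using finite_measure_Union[of "{..<a}" "{a}"] assms
    by (simp add: cdf_def2 flip: ivl_disj_un_singleton(2))
  finally show ?thesis .
qed

lemma measure_cdf_le:
  assumes atomless: "\<And>a. measure M {a} = 0" and t: "0 \<le> t" "t \<le> 1"
  shows "measure M {x. cdf M x \<le> t} = t"
proof (cases "t = 1")
  case True
  then show ?thesis using cdf_bounded_prob prob_space by simp
next
  case False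
  define S where "S = {x. cdf M x \<le> t}"
  have cont: "continuous_on UNIV (cdf M)"
    using isCont_cdf atomless by (simp add: continuous_at_imp_continuous_on)
  obtain b where b: "\<And>x. b \<le> x \<Longrightarrow> t < cdf M x"
    using order_tendstoD(1)[OF cdf_lim_at_top_prob, of t] False t
    by (auto simp: eventually_at_top_linorder)
  have S_bound: "x < b" if "x \<in> S" for x
    using b[of x] that by (force simp: S_def)
  show ?thesis
  proof (cases "S = {}")
    case True
    have "t = 0"
    proof (rule ccontr)
      assume "t \<noteq> 0"
      then obtain x where "cdf M x < t"
        using order_tendstoD(2)[OF cdf_lim_at_bot, of t] t
        by (auto simp: eventually_at_bot_linorder)
      with True show False by (auto simp: S_def dest!: less_imp_le)
    qed
    with True show ?thesis by (simp add: S_def)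
  next
    case False
    define a where "a = Sup S"
    have bdd: "bdd_above S" using S_bound by (auto simp: bdd_above_def intro: less_imp_le)
    have "closed S" unfolding S_def using cont by (intro closed_Collect_le) auto
    then have "a \<in> S" unfolding a_def using False bdd closed_contains_Sup by blast
    have S_eq: "S = {..a}"
    proof
      show "S \<subseteq> {..a}" using bdd by (auto simp: a_def intro: cSup_upper)
      show "{..a} \<subseteq> S" using \<open>a \<in> S\<close> by (auto simp: S_def intro: order_trans cdf_nondecreasing)
    qed
    have "t \<le> cdf M a"
    proof (rule tendsto_lowerbound)
      show "(cdf M \<longlongrightarrow> cdf M a) (at_right a)"
        using cdf_is_right_cont by (simp add: continuous_within)
      have above: "t \<le> cdf M x" if "a < x" for x
        using S_eq that unfolding S_def by (metis atMost_iff mem_Collect_eq not_le less_imp_le)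
      show "\<forall>\<^sub>F x in at_right a. t \<le> cdf M x"
        using eventually_at_right_less[of a] by (rule eventually_mono) (rule above)
    qed simp
    with \<open>a \<in> S\<close> have "cdf M a = t" by (simp add: S_def)
    then show ?thesis unfolding S_def[symmetric] S_eq by (simp add: cdf_def2)
  qed
qed

lemma distributed_cdf_uniform:
  assumes "\<And>a. measure M {a} = 0"
  shows "distributed M lborel (cdf M) (\<lambda>x. indicator {0..1} x / measure lborel {0..1::real})"
proof (rule uniform_distrI_borel_atLeastAtMost)
  show "cdf M \<in> borel_measurable M"
    using isCont_cdf assms
    by (auto intro!: measurable_finite_borel borel_measurable_continuous_onI
             simp: continuous_at_imp_continuous_on)
qed (use measure_cdf_le[OF assms] in simp_all)

lemma expectation_cdf:
  assumes "\<And>a. measure M {a} = 0"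
  shows "expectation (cdf M) = 1/2"
  using uniform_distributed_expectation[OF distributed_cdf_uniform[OF assms]] by simp

lemma variance_cdf:
  assumes "\<And>a. measure M {a} = 0"
  shows "variance (cdf M) = 1/12"
  using uniform_distributed_variance[OF distributed_cdf_uniform[OF assms]] by simp

lemma integral_swap_atMost_atLeast:
  fixes g k :: "real \<Rightarrow> real"
  assumes g: "integrable M g" and k[measurable]: "k \<in> borel_measurable borel"
    and k_bound: "\<And>x. \<bar>k x\<bar> \<le> B"
  shows "(\<integral>x. (\<integral>u. indicator {..x} u * g u \<partial>M) * k x \<partial>M)
       = (\<integral>u. g u * (\<integral>x. indicator {u..} x * k x \<partial>M) \<partial>M)"
proof -
  interpret pair_prob_space M M
    by (simp add: pair_prob_space_def pair_sigma_finite_def prob_space_axioms sigma_finite_measure_axioms)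
  have [measurable]: "g \<in> borel_measurable borel"
    using borel_measurable_integrable[OF g] by simp
  let ?h = "\<lambda>u x. indicator {..x} u * g u * k x"
  have "integrable (M \<Otimes>\<^sub>M M) (\<lambda>p. g (fst p))"
    by (rule Fubini_integrable) (use g in \<open>simp_all add: prob_space\<close>)
  then have "integrable (M \<Otimes>\<^sub>M M) (\<lambda>p. g (fst p) * (indicator {..snd p} (fst p) * k (snd p)))"
    using order_trans[OF abs_ge_zero k_bound]
    by (intro integrable_mult_bounded[where B = B]) (auto simp: indicator_def k_bound)
  then have "integrable (M \<Otimes>\<^sub>M M) (case_prod ?h)"
    by (simp add: case_prod_beta' mult_ac)
  then have "(\<integral>x. \<integral>u. ?h u x \<partial>M \<partial>M) = (\<integral>u. \<integral>x. ?h u x \<partial>M \<partial>M)"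
    by (rule Fubini_integral)
  also have "\<dots> = (\<integral>u. g u * (\<integral>x. indicator {u..} x * k x \<partial>M) \<partial>M)"
    by (auto intro!: Bochner_Integration.integral_cong split: split_indicator
             simp flip: integral_mult_right_zero)
  finally show ?thesis by simp
qed

end

locale symmetric_density =
  fixes f :: "real \<Rightarrow> real"
  assumes nonneg: "\<And>x. 0 \<le> f x"
    and density_integrable: "integrable lborel f"
    and total: "(LINT x|lborel. f x) = 1"
    and symmetric: "\<And>x. f (- x) = f x"
    and integrable_second_moment: "integrable lborel (\<lambda>x. x\<^sup>2 * f x)"
begin

lemma measurable_density[measurable]: "f \<in> borel_measurable borel"
  using borel_measurable_integrable[OF density_integrable] by simp

definition law :: "real measure" where
  "law = density lborel f"

lemma sets_law[measurable_cong, simp]: "sets law = sets borel"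
  by (simp add: law_def)

lemma prob_space_law: "prob_space law"
proof
  have "emeasure law (space law) = (\<integral>\<^sup>+ x. ennreal (f x) \<partial>lborel)"
    by (simp add: law_def emeasure_density)
  also have "\<dots> = 1"
    using density_integrable nonneg total by (subst nn_integral_eq_integral) auto
  finally show "emeasure law (space law) = 1" .
qed

sublocale real_distribution law
  using prob_space_law by (simp add: real_distribution_def real_distribution_axioms_def)

lemma integral_law: "g \<in> borel_measurable borel \<Longrightarrow> (\<integral>x. g x \<partial>law) = (\<integral>x. f x * g x \<partial>lborel)"
  unfolding law_def by (subst integral_density) (auto simp: nonneg)

lemma singleton_null_sets_law: "{a} \<in> null_sets law"
proof -
  have "AE x in lborel. x \<in> {a} \<longrightarrow> ennreal (f x) = 0"
    using AE_lborel_singleton[of a] by eventually_elim auto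
  then show ?thesis
    unfolding law_def by (subst null_sets_density_iff) auto
qed

lemma measure_law_singleton: "measure law {a} = 0"
  using singleton_null_sets_law by (simp add: measure_def null_setsD1)

lemma measurable_cdf_law[measurable]: "cdf law \<in> borel_measurable borel"
  using isCont_cdf measure_law_singleton
  by (auto intro: borel_measurable_continuous_onI simp: continuous_at_imp_continuous_on)

lemma integral_law_reflect:
  fixes g :: "real \<Rightarrow> real"
  assumes [measurable]: "g \<in> borel_measurable borel"
  shows "(\<integral>x. g (- x) \<partial>law) = (\<integral>x. g x \<partial>law)"
proof -
  have "(\<integral>x. g (- x) \<partial>law) = (\<integral>x. f (- x) * g (- x) \<partial>lborel)"
    by (simp add: integral_law symmetric)
  also have "\<dots> = (\<integral>x. f x * g x \<partial>lborel)"
    using lborel_integral_real_affine[of "-1" "\<lambda>x. f x * g x" 0] by simp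
  finally show ?thesis by (simp add: integral_law)
qed

lemma cdf_law_reflect: "cdf law (- x) = 1 - cdf law x"
proof -
  have "cdf law (- x) = (\<integral>u. indicator {..-x} (- u) \<partial>law)"
    by (simp add: integral_law_reflect cdf_def2)
  also have "\<dots> = (\<integral>u. indicator {x..} u \<partial>law)"
    by (intro Bochner_Integration.integral_cong) (auto split: split_indicator)
  finally show ?thesis by (simp add: measure_atLeast_eq_cdf measure_law_singleton)
qed

lemma integrable_law_iff:
  "g \<in> borel_measurable borel \<Longrightarrow> integrable law g \<longleftrightarrow> integrable lborel (\<lambda>x. f x * g x)"
  unfolding law_def by (subst integrable_density) (auto simp: nonneg)

lemma integrable_law_square: "integrable law (\<lambda>x. x\<^sup>2)"
  using integrable_second_moment by (subst integrable_law_iff) (auto simp: mult.commute)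

lemma integrable_law_id: "integrable law (\<lambda>x. x)"
  by (rule square_integrable_imp_integrable[OF _ integrable_law_square]) simp

lemma integrable_law_bounded:
  fixes g :: "real \<Rightarrow> real"
  assumes "g \<in> borel_measurable borel" and "\<And>x. \<bar>g x\<bar> \<le> B"
  shows "integrable law g"
  using assms by (intro integrable_const_bound[where B = B] AE_I2) auto

lemma sigma2_eq_second_moment: "sigma2 f = (\<integral>x. x\<^sup>2 \<partial>law)"
  by (simp add: sigma2_def integral_law mult.commute)

lemma vfun_eq_integral: "vfun f x = (\<integral>u. indicator {..x} u * u \<partial>law)"
  unfolding vfun_def set_lebesgue_integral_def
  by (simp add: integral_law mult_ac)

lemma measurable_vfun[measurable]: "vfun f \<in> borel_measurable borel"
  unfolding vfun_eq_integral[abs_def] indicator_def atMost_iff by measurable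

lemma qfun_eq_integral: "qfun f s = (\<integral>x. indicator {..s} x * vfun f x \<partial>law)"
  unfolding qfun_def set_lebesgue_integral_def
  by (simp add: integral_law mult_ac)

lemma measurable_qfun[measurable]: "qfun f \<in> borel_measurable borel"
  unfolding qfun_eq_integral[abs_def] indicator_def atMost_iff by measurable

lemma abs_vfun_le: "\<bar>vfun f x\<bar> \<le> (\<integral>u. \<bar>u\<bar> \<partial>law)"
proof -
  have "\<bar>vfun f x\<bar> \<le> (\<integral>u. \<bar>indicator {..x} u * u\<bar> \<partial>law)"
    unfolding vfun_eq_integral by (rule integral_abs_bound)
  also have "\<dots> \<le> (\<integral>u. \<bar>u\<bar> \<partial>law)"
    using integrable_law_id by (intro integral_mono') (auto split: split_indicator)
  finally show ?thesis .
qed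

lemma integrable_vfun: "integrable law (vfun f)"
  using abs_vfun_le by (intro integrable_law_bounded) simp_all

lemma abs_one_minus_cdf_le: "\<bar>1 - cdf law x\<bar> \<le> 1"
  using cdf_nonneg[of x] cdf_bounded_prob[of x] by simp

definition tail_integral :: "real \<Rightarrow> real" where
  "tail_integral u = (\<integral>x. indicator {u..} x * (1 - cdf law x) \<partial>law)"

lemma measurable_tail_integral[measurable]: "tail_integral \<in> borel_measurable borel"
  unfolding tail_integral_def[abs_def] indicator_def atLeast_iff by measurable

lemma abs_tail_integral_le: "\<bar>tail_integral u\<bar> \<le> 1"
proof -
  have "\<bar>tail_integral u\<bar> \<le> (\<integral>x. \<bar>indicator {u..} x * (1 - cdf law x)\<bar> \<partial>law)"
    unfolding tail_integral_def by (rule integral_abs_bound)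
  also have "\<dots> \<le> (\<integral>x. 1 \<partial>law)"
    using abs_one_minus_cdf_le
    by (intro integral_mono') (auto simp: abs_mult split: split_indicator)
  finally show ?thesis using prob_space by simp
qed

lemma integral_qfun_eq_tail_integral:
  "(LINT s|lborel. qfun f s * f s) = (\<integral>u. u * tail_integral u \<partial>law)"
proof -
  have "(LINT s|lborel. qfun f s * f s) = (\<integral>s. qfun f s \<partial>law)"
    by (simp add: integral_law mult.commute)
  also have "\<dots> = (\<integral>s. (\<integral>x. indicator {..s} x * vfun f x \<partial>law) * 1 \<partial>law)"
    by (simp add: qfun_eq_integral)
  also have "\<dots> = (\<integral>x. vfun f x * (\<integral>s. indicator {x..} s * 1 \<partial>law) \<partial>law)"
    by (rule integral_swap_atMost_atLeast[OF integrable_vfun, where B = 1]) simp_all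
  also have "\<dots> = (\<integral>x. (\<integral>u. indicator {..x} u * u \<partial>law) * (1 - cdf law x) \<partial>law)"
    by (simp add: vfun_eq_integral measure_atLeast_eq_cdf measure_law_singleton)
  also have "\<dots> = (\<integral>u. u * tail_integral u \<partial>law)"
    unfolding tail_integral_def
    by (rule integral_swap_atMost_atLeast[OF integrable_law_id, where B = 1])
       (simp_all add: abs_one_minus_cdf_le)
  finally show ?thesis .
qed

lemma tail_integral_reflect: "tail_integral u - tail_integral (- u) = 1/2 - cdf law u"
proof -
  have "tail_integral (- u) = (\<integral>x. indicator {- u..} (- x) * (1 - cdf law (- x)) \<partial>law)"
    unfolding tail_integral_def
    by (rule integral_law_reflect[symmetric, of "\<lambda>x. indicator {- u..} x * (1 - cdf law x)"]) simp
  also have "\<dots> = (\<integral>x. indicator {..u} x * cdf law x \<partial>law)"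
    by (intro Bochner_Integration.integral_cong) (auto simp: cdf_law_reflect split: split_indicator)
  finally have reflected: "tail_integral (- u) = (\<integral>x. indicator {..u} x * cdf law x \<partial>law)" .
  have "tail_integral u - tail_integral (- u)
      = (\<integral>x. indicator {u..} x * (1 - cdf law x) - indicator {..u} x * cdf law x \<partial>law)"
    unfolding reflected tail_integral_def[of u]
    by (intro Bochner_Integration.integral_diff[symmetric] integrable_law_bounded[where B = 1])
       (auto simp: cdf_nonneg cdf_bounded_prob split: split_indicator)
  also have "\<dots> = (\<integral>x. indicator {u..} x - cdf law x \<partial>law)"
    using AE_not_in[OF singleton_null_sets_law[of u]]
    by (intro integral_cong_AE) (auto elim!: eventually_mono split: split_indicator)
  also have "\<dots> = measure law {u..} - (\<integral>x. cdf law x \<partial>law)"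
    by (subst Bochner_Integration.integral_diff)
       (auto intro!: integrable_law_bounded[where B = 1] simp: cdf_nonneg cdf_bounded_prob)
  finally show ?thesis
    by (simp add: measure_atLeast_eq_cdf measure_law_singleton expectation_cdf)
qed

lemma double_integral_qfun:
  "2 * (LINT s|lborel. qfun f s * f s) = (\<integral>u. u * (1/2 - cdf law u) \<partial>law)"
proof -
  have tail: "integrable law (\<lambda>u. u * tail_integral u)"
    by (rule integrable_mult_bounded[OF integrable_law_id _ abs_tail_integral_le]) simp
  have reflected_tail: "integrable law (\<lambda>u. u * tail_integral (- u))"
    by (rule integrable_mult_bounded[OF integrable_law_id _ abs_tail_integral_le]) simp
  have "(\<integral>u. u * tail_integral u \<partial>law) = - (\<integral>u. u * tail_integral (- u) \<partial>law)"
    using integral_law_reflect[of "\<lambda>u. u * tail_integral u"] by simp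
  then have "2 * (LINT s|lborel. qfun f s * f s)
      = (\<integral>u. u * tail_integral u \<partial>law) - (\<integral>u. u * tail_integral (- u) \<partial>law)"
    by (simp add: integral_qfun_eq_tail_integral)
  also have "\<dots> = (\<integral>u. u * (tail_integral u - tail_integral (- u)) \<partial>law)"
    using tail reflected_tail by (simp add: right_diff_distrib)
  finally show ?thesis by (simp add: tail_integral_reflect)
qed

lemma integral_qfun_squared_le: "(LINT s|lborel. qfun f s * f s)\<^sup>2 \<le> sigma2 f / 48"
proof -
  have bounded: "\<bar>1/2 - cdf law u\<bar> \<le> 1" for u
    using cdf_nonneg[of u] cdf_bounded_prob[of u] by simp
  have "(2 * (LINT s|lborel. qfun f s * f s))\<^sup>2
      \<le> (\<integral>u. u\<^sup>2 \<partial>law) * (\<integral>u. (1/2 - cdf law u)\<^sup>2 \<partial>law)"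
    unfolding double_integral_qfun
  proof (rule cauchy_schwarz_integral[OF integrable_law_square])
    show "integrable law (\<lambda>u. (1/2 - cdf law u)\<^sup>2)"
      using bounded by (intro integrable_law_bounded[where B = 1]) (simp_all add: abs_square_le_1)
    show "integrable law (\<lambda>u. u * (1/2 - cdf law u))"
      by (rule integrable_mult_bounded[OF integrable_law_id _ bounded]) simp
  qed
  also have "(\<integral>u. (1/2 - cdf law u)\<^sup>2 \<partial>law) = 1/12"
    using variance_cdf[OF measure_law_singleton]
    by (simp add: expectation_cdf[OF measure_law_singleton] power2_commute)
  finally show ?thesis by (simp add: sigma2_eq_second_moment power_mult_distrib)
qed

end

theorem mainTheorem3:
  fixes f :: "real \<Rightarrow> real"
  assumes meas: "f \<in> borel_measurable borel"
    and nonneg: "\<And>x. f x \<ge> 0"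
    and integrable: "integrable lborel f"
    and total: "(LINT x|lborel. f x) = 1"
    and symm: "\<And>x. f (- x) = f x"
    and fin_var: "integrable lborel (\<lambda>x. x\<^sup>2 * f x)"
    and pos_var: "sigma2 f > 0"
  shows "45 * (LINT s|lborel. qfun f s * f s)\<^sup>2 < sigma2 f"
proof -
  interpret symmetric_density f
    using nonneg integrable total symm fin_var by unfold_locales
  show ?thesis
    using integral_qfun_squared_le pos_var by linarith
qed

end
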